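(* Let $B>0$ and let $y_1,y_2,y_3,y_4$ be defined for $t>0$, $x\in\mathbb{R}\setminus\{0\}$, $u=x/(Bt)^{1/4}$ by $y_{1}=(Bt)^{1/4}[\tfrac{1}{\sqrt2}z_2(u)-\tfrac{1}{2\Gamma(3/4)}z_3(u)+\tfrac{1}{6\sqrt2\Gamma(1/2)}z_4(u)]$, $y_{2}=(Bt)^{1/4}[\tfrac{1}{\Gamma(5/4)}z_1(u)-\tfrac{1}{\sqrt2}z_2(u)+\tfrac{1}{6\sqrt2\Gamma(1/2)}z_4(u)]$, $y_{3}=(Bt)^{1/4}[\tfrac{1}{\sqrt2}z_2(u)+\tfrac{1}{2\Gamma(3/4)}z_3(u)+\tfrac{1}{6\sqrt2\Gamma(1/2)}z_4(u)]$, $y_{4}=(Bt)^{1/4}[\tfrac{1}{\Gamma(5/4)}z_1(u)+\tfrac{1}{\sqrt2}z_2(u)-\tfrac{1}{6\sqrt2\Gamma(1/2)}z_4(u)]$, where $z_{1}(u)={}_{1}F_{3}(-\tfrac{1}{4};\tfrac{1}{4},\tfrac{1}{2},\tfrac{3}{4};\tfrac{u^{4}}{256})$, $z_{2}(u)=u$, $z_{3}(u)=u^{2}\,{}_{1}F_{3}(\tfrac{1}{4};\tfrac{3}{4},\tfrac{5}{4},\tfrac{3}{2};\tfrac{u^{4}}{256})$, $z_{4}(u)=u^{3}\,{}_{1}F_{3}(\tfrac{1}{2};\tfrac{5}{4},\tfrac{3}{2},\tfrac{7}{4};\tfrac{u^{4}}{256})$. Then for $t>0$, $\lim_{x\to\infty}y_3(t,x)=\infty$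 and $\lim_{x\to\infty}y_4(t,x)=-\infty$; for $x>0$, $\lim_{t\to0}y_3(t,x)=\infty$ and $\lim_{t\to0}y_4(t,x)=-\infty$. Similarly, for $t>0$, $\lim_{x\to-\infty}y_1(t,x)=\lim_{x\to-\infty}y_2(t,x)=-\infty$, and for $x>0$, $\lim_{t\to0}y_1(t,-x)=\lim_{t\to0}y_2(t,-x)=-\infty$.
   Context: ${}_{p}F_{q}(a_{1},\ldots,a_{p};b_{1},\ldots,b_{q};\nu)=\sum_{k\ge0}\frac{(a_{1})_{k}\cdots(a_{p})_{k}}{(b_{1})_{k}\cdots(b_{q})_{k}}\frac{\nu^{k}}{k!}$ is the generalized hypergeometric function, with Pochhammer symbol $(\lambda)_{k}=\lambda(\lambda+1)\cdots(\lambda+k-1)$, $(\lambda)_0=1$. $\Gamma$ is the Gamma function. *)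

theory Defs
  imports "HOL-Analysis.Analysis"
begin

definition hypgeom :: "real list \<Rightarrow> real list \<Rightarrow> real \<Rightarrow> real" where
  "hypgeom as bs z =
     (\<Sum>k. (\<Prod>a\<leftarrow>as. pochhammer a k) / (\<Prod>b\<leftarrow>bs. pochhammer b k) * z ^ k / fact k)"

definition z1 :: "real \<Rightarrow> real" where
  "z1 u = hypgeom [-1/4] [1/4, 1/2, 3/4] (u ^ 4 / 256)"

definition z2 :: "real \<Rightarrow> real" where
  "z2 u = u"

definition z3 :: "real \<Rightarrow> real" where
  "z3 u = u ^ 2 * hypgeom [1/4] [3/4, 5/4, 3/2] (u ^ 4 / 256)"

definition z4 :: "real \<Rightarrow> real" where
  "z4 u = u ^ 3 * hypgeom [1/2] [5/4, 3/2, 7/4] (u ^ 4 / 256)"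

definition uvar :: "real \<Rightarrow> real \<Rightarrow> real \<Rightarrow> real" where
  "uvar B t x = x / (B * t) powr (1/4)"

definition y1 :: "real \<Rightarrow> real \<Rightarrow> real \<Rightarrow> real" where
  "y1 B t x = (B * t) powr (1/4) *
     (1 / sqrt 2 * z2 (uvar B t x) - 1 / (2 * Gamma (3/4)) * z3 (uvar B t x)
      + 1 / (6 * sqrt 2 * Gamma (1/2)) * z4 (uvar B t x))"

definition y2 :: "real \<Rightarrow> real \<Rightarrow> real \<Rightarrow> real" where
  "y2 B t x = (B * t) powr (1/4) *
     (1 / Gamma (5/4) * z1 (uvar B t x) - 1 / sqrt 2 * z2 (uvar B t x)
      + 1 / (6 * sqrt 2 * Gamma (1/2)) * z4 (uvar B t x))"

definition y3 :: "real \<Rightarrow> real \<Rightarrow> real \<Rightarrow> real" where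
  "y3 B t x = (B * t) powr (1/4) *
     (1 / sqrt 2 * z2 (uvar B t x) + 1 / (2 * Gamma (3/4)) * z3 (uvar B t x)
      + 1 / (6 * sqrt 2 * Gamma (1/2)) * z4 (uvar B t x))"

definition y4 :: "real \<Rightarrow> real \<Rightarrow> real \<Rightarrow> real" where
  "y4 B t x = (B * t) powr (1/4) *
     (1 / Gamma (5/4) * z1 (uvar B t x) + 1 / sqrt 2 * z2 (uvar B t x)
      - 1 / (6 * sqrt 2 * Gamma (1/2)) * z4 (uvar B t x))"

end

theory Submission
  imports Defs "HOL-Real_Asymp.Real_Asymp"
begin

(* For u >= 0 the three 1F3 series are controlled by their first terms: every term of z1 after
   the first is nonpositive, so z1 u <= 1, while all terms of z3 and z4 are nonnegative, so
   z3 u >= u^2 and z4 u >= u^3.  With s = (B t)^(1/4) this gives, for x >= 0,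
     y3 >= x / sqrt 2 + x^2 / (2 Gamma(3/4) s),
     y4 <= s / Gamma(5/4) + x / sqrt 2 - x^3 / (6 sqrt 2 Gamma(1/2) s^2),
   and both bounds diverge as x -> oo or as s -> 0+.  Since z1, z3 are even and z2, z4 odd,
   y1(t, x) = - y3(t, -x) and y2(t, x) = y4(t, -x), which gives the claims about y1 and y2. *)

lemma zero_le_pochhammer:
  fixes x :: "'a :: linordered_semidom"
  shows "0 \<le> x \<Longrightarrow> 0 \<le> pochhammer x n"
  by (induction n) (auto simp: pochhammer_Suc)

lemma abs_pochhammer_le:
  fixes a :: "'a :: linordered_idom"
  shows "\<bar>pochhammer a n\<bar> \<le> pochhammer \<bar>a\<bar> n"
proof (induction n)
  case (Suc n)
  have "\<bar>a + of_nat n\<bar> \<le> \<bar>a\<bar> + of_nat n"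
    using abs_triangle_ineq[of a "of_nat n"] by simp
  with Suc show ?case
    by (simp add: pochhammer_Suc abs_mult mult_mono zero_le_pochhammer)
qed simp

lemma pochhammer_mono:
  fixes a b :: "'a :: linordered_semidom"
  assumes "0 \<le> a" "a \<le> b"
  shows "pochhammer a n \<le> pochhammer b n"
proof (induction n)
  case (Suc n)
  have "0 \<le> pochhammer a n" using assms(1) by (rule zero_le_pochhammer)
  with Suc assms show ?case by (simp add: pochhammer_Suc mult_mono)
qed simp

lemma pochhammer_ge_min_1:
  assumes "0 < b"
  shows "min b 1 \<le> pochhammer (b::real) n"
proof (induction n)
  case (Suc n)
  show ?case
  proof (cases "n = 0")
    case False
    with assms have "1 \<le> b + real n" by simp
    moreover have "0 \<le> pochhammer b n" using assms by (simp add: pochhammer_nonneg)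
    ultimately have "pochhammer b n \<le> pochhammer b (Suc n)"
      by (simp add: pochhammer_Suc mult_le_cancel_left1)
    with Suc.IH show ?thesis by linarith
  qed simp
qed simp

lemma summable_bounded_coeffs_exp_series:
  fixes c :: "nat \<Rightarrow> real"
  assumes "\<And>k. \<bar>c k\<bar> \<le> C"
  shows "summable (\<lambda>k. c k * w ^ k / fact k)"
proof (rule summable_comparison_test')
  show "summable (\<lambda>k. C * (inverse (fact k) * \<bar>w\<bar> ^ k))"
    by (intro summable_mult summable_exp)
  fix k :: nat
  have "norm (c k * w ^ k / fact k) = \<bar>c k\<bar> * (inverse (fact k) * \<bar>w\<bar> ^ k)"
    by (simp add: abs_mult power_abs field_simps)
  also have "\<dots> \<le> C * (inverse (fact k) * \<bar>w\<bar> ^ k)"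
    by (intro mult_right_mono assms) auto
  finally show "norm (c k * w ^ k / fact k) \<le> C * (inverse (fact k) * \<bar>w\<bar> ^ k)" .
qed

lemma hypgeom_1_3_eq:
  "hypgeom [a] [b1, b2, b3] w =
     (\<Sum>k. pochhammer a k / (pochhammer b1 k * pochhammer b2 k * pochhammer b3 k) * w ^ k / fact k)"
  by (simp add: hypgeom_def mult.assoc)

lemma summable_hypgeom_1_3:
  fixes a b1 b2 b3 w :: real
  assumes "\<bar>a\<bar> \<le> b1" "0 < b1" "0 < b2" "0 < b3"
  shows "summable (\<lambda>k. pochhammer a k / (pochhammer b1 k * pochhammer b2 k * pochhammer b3 k) * w ^ k / fact k)"
proof (rule summable_bounded_coeffs_exp_series)
  fix k :: nat
  have "\<bar>pochhammer a k\<bar> \<le> pochhammer b1 k"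
    using abs_pochhammer_le pochhammer_mono[OF abs_ge_zero assms(1)] by (rule order_trans)
  then have upper: "\<bar>pochhammer a k\<bar> / pochhammer b1 k \<le> 1"
    using pochhammer_pos[OF assms(2)] by simp
  have denominator_pos: "0 < pochhammer b2 k * pochhammer b3 k"
    using assms(3,4) by (simp add: pochhammer_pos)
  have "min b2 1 * min b3 1 \<le> pochhammer b2 k * pochhammer b3 k"
    using assms(3,4) by (intro mult_mono pochhammer_ge_min_1) (auto simp: pochhammer_nonneg)
  then have lower: "1 / (pochhammer b2 k * pochhammer b3 k) \<le> 1 / (min b2 1 * min b3 1)"
    using assms(3,4) denominator_pos by (intro divide_left_mono) auto
  have "\<bar>pochhammer a k / (pochhammer b1 k * pochhammer b2 k * pochhammer b3 k)\<bar>
      = \<bar>pochhammer a k\<bar> / pochhammer b1 k * (1 / (pochhammer b2 k * pochhammer b3 k))"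
    using assms(2-4) by (simp add: abs_mult abs_of_pos pochhammer_pos)
  also have "\<dots> \<le> 1 * (1 / (min b2 1 * min b3 1))"
    using upper lower denominator_pos by (intro mult_mono) auto
  finally show "\<bar>pochhammer a k / (pochhammer b1 k * pochhammer b2 k * pochhammer b3 k)\<bar>
      \<le> 1 / (min b2 1 * min b3 1)" by simp
qed

lemma hypgeom_1_3_ge_1:
  fixes a b1 b2 b3 w :: real
  assumes "0 < a" "a \<le> b1" "0 < b2" "0 < b3" "0 \<le> w"
  shows "1 \<le> hypgeom [a] [b1, b2, b3] w"
proof -
  let ?f = "\<lambda>k. pochhammer a k / (pochhammer b1 k * pochhammer b2 k * pochhammer b3 k) * w ^ k / fact k"
  have "summable ?f" using assms by (intro summable_hypgeom_1_3) auto
  moreover have "0 \<le> ?f k" for k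
    using assms by (simp add: pochhammer_nonneg)
  ultimately have "sum ?f {..<1} \<le> suminf ?f" by (intro sum_le_suminf) auto
  then show ?thesis by (simp add: hypgeom_1_3_eq)
qed

lemma hypgeom_1_3_le_1:
  fixes a b1 b2 b3 w :: real
  assumes "-1 \<le> a" "a \<le> 0" "-a \<le> b1" "0 < b1" "0 < b2" "0 < b3" "0 \<le> w"
  shows "hypgeom [a] [b1, b2, b3] w \<le> 1"
proof -
  let ?f = "\<lambda>k. pochhammer a k / (pochhammer b1 k * pochhammer b2 k * pochhammer b3 k) * w ^ k / fact k"
  have "summable ?f" using assms by (intro summable_hypgeom_1_3) auto
  have "pochhammer a (Suc n) \<le> 0" for n
    using assms(1,2) by (simp add: pochhammer_rec mult_nonpos_nonneg zero_le_pochhammer)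
  then have "?f (Suc n) \<le> 0" for n
    using assms(4-7) by (intro divide_nonpos_pos mult_nonpos_nonneg) (auto simp: pochhammer_pos)
  moreover have "summable (\<lambda>n. ?f (Suc n))"
    using \<open>summable ?f\<close> by (rule summable_Suc_iff[THEN iffD2])
  ultimately have "(\<Sum>n. ?f (Suc n)) \<le> 0"
    by (intro suminf_le_const sum_nonpos)
  then show ?thesis
    using suminf_split_head[OF \<open>summable ?f\<close>] by (simp add: hypgeom_1_3_eq)
qed

lemma z1_le_1: "z1 u \<le> 1"
  unfolding z1_def by (rule hypgeom_1_3_le_1) auto

lemma z3_ge_square: "u\<^sup>2 \<le> z3 u"
proof -
  have "1 \<le> hypgeom [1/4] [3/4, 5/4, 3/2] (u ^ 4 / 256)"
    by (rule hypgeom_1_3_ge_1) auto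
  then show ?thesis unfolding z3_def
    using mult_left_mono[of 1 _ "u\<^sup>2"] by simp
qed

lemma z4_ge_cube:
  assumes "0 \<le> u"
  shows "u ^ 3 \<le> z4 u"
proof -
  have "1 \<le> hypgeom [1/2] [5/4, 3/2, 7/4] (u ^ 4 / 256)"
    by (rule hypgeom_1_3_ge_1) auto
  then show ?thesis unfolding z4_def
    using assms mult_left_mono[of 1 _ "u ^ 3"] by simp
qed

lemma z1_minus: "z1 (- u) = z1 u"
  by (simp add: z1_def)

lemma z3_minus: "z3 (- u) = z3 u"
  by (simp add: z3_def)

lemma z4_minus: "z4 (- u) = - z4 u"
  by (simp add: z4_def)

lemma y1_eq_minus_y3_reflected: "y1 B t x = - y3 B t (- x)"
proof -
  have "uvar B t x = - uvar B t (- x)" by (simp add: uvar_def)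
  then show ?thesis
    by (simp add: y1_def y3_def z2_def z3_minus z4_minus algebra_simps)
qed

lemma y2_eq_y4_reflected: "y2 B t x = y4 B t (- x)"
proof -
  have "uvar B t x = - uvar B t (- x)" by (simp add: uvar_def)
  then show ?thesis
    by (simp add: y2_def y4_def z2_def z1_minus z4_minus algebra_simps)
qed

lemma y3_lower_bound:
  assumes "0 < B * t" "0 \<le> x"
  shows "x / sqrt 2 + x\<^sup>2 / (2 * Gamma (3/4) * (B * t) powr (1/4)) \<le> y3 B t x"
proof -
  define s where "s = (B * t) powr (1/4)"
  define u where "u = x / s"
  have "0 < s" using assms(1) by (auto simp: s_def)
  then have "0 \<le> u" using assms(2) by (simp add: u_def)
  have y3_eq: "y3 B t x = s * (u / sqrt 2 + z3 u / (2 * Gamma (3/4)) + z4 u / (6 * sqrt 2 * Gamma (1/2)))"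
    by (simp add: y3_def s_def u_def uvar_def z2_def)
  have "u\<^sup>2 / (2 * Gamma (3/4)) \<le> z3 u / (2 * Gamma (3/4))"
    using z3_ge_square Gamma_real_pos by (intro divide_right_mono) auto
  moreover have "0 \<le> z4 u / (6 * sqrt 2 * Gamma (1/2))"
    using order_trans[OF zero_le_power[OF \<open>0 \<le> u\<close>] z4_ge_cube[OF \<open>0 \<le> u\<close>]]
      Gamma_real_pos[of "1/2"] by simp
  ultimately have "s * (u / sqrt 2 + u\<^sup>2 / (2 * Gamma (3/4))) \<le> y3 B t x"
    unfolding y3_eq using \<open>0 < s\<close> by (intro mult_left_mono) auto
  moreover have "s * (u / sqrt 2 + u\<^sup>2 / (2 * Gamma (3/4))) = x / sqrt 2 + x\<^sup>2 / (2 * Gamma (3/4) * s)"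
    using \<open>0 < s\<close> by (simp add: u_def field_simps power2_eq_square)
  ultimately show ?thesis by (simp add: s_def)
qed

lemma y4_upper_bound:
  assumes "0 < B * t" "0 \<le> x"
  shows "y4 B t x \<le> (B * t) powr (1/4) / Gamma (5/4) + x / sqrt 2
                      - x ^ 3 / (6 * sqrt 2 * Gamma (1/2) * ((B * t) powr (1/4))\<^sup>2)"
proof -
  define s where "s = (B * t) powr (1/4)"
  define u where "u = x / s"
  have "0 < s" using assms(1) by (auto simp: s_def)
  then have "0 \<le> u" using assms(2) by (simp add: u_def)
  have y4_eq: "y4 B t x = s * (z1 u / Gamma (5/4) + u / sqrt 2 - z4 u / (6 * sqrt 2 * Gamma (1/2)))"
    by (simp add: y4_def s_def u_def uvar_def z2_def)
  have "z1 u / Gamma (5/4) \<le> 1 / Gamma (5/4)"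
    using z1_le_1 Gamma_real_pos by (intro divide_right_mono) auto
  moreover have "u ^ 3 / (6 * sqrt 2 * Gamma (1/2)) \<le> z4 u / (6 * sqrt 2 * Gamma (1/2))"
    using z4_ge_cube[OF \<open>0 \<le> u\<close>] Gamma_real_pos by (intro divide_right_mono) auto
  ultimately have "y4 B t x \<le> s * (1 / Gamma (5/4) + u / sqrt 2 - u ^ 3 / (6 * sqrt 2 * Gamma (1/2)))"
    unfolding y4_eq using \<open>0 < s\<close> by (intro mult_left_mono) auto
  also have "\<dots> = s / Gamma (5/4) + x / sqrt 2 - x ^ 3 / (6 * sqrt 2 * Gamma (1/2) * s\<^sup>2)"
    using \<open>0 < s\<close> by (simp add: u_def field_simps power2_eq_square power3_eq_cube)
  finally show ?thesis by (simp add: s_def)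
qed

lemma y3_filterlim_at_top_in_x:
  assumes "0 < B * t"
  shows "filterlim (\<lambda>x. y3 B t x) at_top at_top"
proof (rule filterlim_at_top_mono)
  define c where "c = 1 / (2 * Gamma (3/4) * (B * t) powr (1/4))"
  have "0 < (B * t) powr (1/4)" using assms by auto
  then have "0 < c" using Gamma_real_pos[of "3/4"] by (simp add: c_def)
  then show "filterlim (\<lambda>x. x / sqrt 2 + c * x\<^sup>2) at_top at_top" by real_asymp
  show "\<forall>\<^sub>F x in at_top. x / sqrt 2 + c * x\<^sup>2 \<le> y3 B t x"
  proof (rule eventually_mono[OF eventually_ge_at_top[of 0]])
    fix x :: real assume "0 \<le> x"
    from y3_lower_bound[OF assms this] show "x / sqrt 2 + c * x\<^sup>2 \<le> y3 B t x" by (simp add: c_def)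
  qed
qed

lemma y4_filterlim_at_bot_in_x:
  assumes "0 < B * t"
  shows "filterlim (\<lambda>x. y4 B t x) at_bot at_top"
proof (rule filterlim_at_bot_mono)
  define s where "s = (B * t) powr (1/4)"
  define c where "c = 1 / (6 * sqrt 2 * Gamma (1/2) * s\<^sup>2)"
  have "0 < s" using assms by (auto simp: s_def)
  then have "0 < c" using Gamma_real_pos[of "1/2"] by (simp add: c_def)
  then show "filterlim (\<lambda>x. s / Gamma (5/4) + x / sqrt 2 - c * x ^ 3) at_bot at_top" by real_asymp
  show "\<forall>\<^sub>F x in at_top. y4 B t x \<le> s / Gamma (5/4) + x / sqrt 2 - c * x ^ 3"
  proof (rule eventually_mono[OF eventually_ge_at_top[of 0]])
    fix x :: real assume "0 \<le> x"
    from y4_upper_bound[OF assms this] show "y4 B t x \<le> s / Gamma (5/4) + x / sqrt 2 - c * x ^ 3"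
      by (simp add: c_def s_def)
  qed
qed

lemma y3_filterlim_at_top_in_t:
  assumes "0 < B" "0 < x"
  shows "filterlim (\<lambda>t. y3 B t x) at_top (at_right 0)"
proof (rule filterlim_at_top_mono)
  define c where "c = x\<^sup>2 / (2 * Gamma (3/4))"
  have "0 < c" using assms Gamma_real_pos[of "3/4"] by (simp add: c_def)
  with \<open>0 < B\<close> show "filterlim (\<lambda>t. x / sqrt 2 + c / (B * t) powr (1/4)) at_top (at_right 0)"
    by real_asymp
  show "\<forall>\<^sub>F t in at_right 0. x / sqrt 2 + c / (B * t) powr (1/4) \<le> y3 B t x"
  proof (rule eventually_mono[OF eventually_at_right_less])
    fix t :: real assume "0 < t"
    with assms have "x / sqrt 2 + x\<^sup>2 / (2 * Gamma (3/4) * (B * t) powr (1/4)) \<le> y3 B t x"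
      by (intro y3_lower_bound) auto
    then show "x / sqrt 2 + c / (B * t) powr (1/4) \<le> y3 B t x" by (simp add: c_def)
  qed
qed

lemma y4_filterlim_at_bot_in_t:
  assumes "0 < B" "0 < x"
  shows "filterlim (\<lambda>t. y4 B t x) at_bot (at_right 0)"
proof (rule filterlim_at_bot_mono)
  define a :: real where "a = 1 / Gamma (5/4)"
  define c where "c = x ^ 3 / (6 * sqrt 2 * Gamma (1/2))"
  have "0 < c" using assms Gamma_real_pos[of "1/2"] by (simp add: c_def)
  with \<open>0 < B\<close> show "filterlim (\<lambda>t. a * (B * t) powr (1/4) + x / sqrt 2
      - c / ((B * t) powr (1/4))\<^sup>2) at_bot (at_right 0)"
    by real_asymp
  show "\<forall>\<^sub>F t in at_right 0. y4 B t x \<le> a * (B * t) powr (1/4) + x / sqrt 2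
      - c / ((B * t) powr (1/4))\<^sup>2"
  proof (rule eventually_mono[OF eventually_at_right_less])
    fix t :: real assume "0 < t"
    with assms have "y4 B t x \<le> (B * t) powr (1/4) / Gamma (5/4) + x / sqrt 2
                      - x ^ 3 / (6 * sqrt 2 * Gamma (1/2) * ((B * t) powr (1/4))\<^sup>2)"
      by (intro y4_upper_bound) auto
    then show "y4 B t x \<le> a * (B * t) powr (1/4) + x / sqrt 2 - c / ((B * t) powr (1/4))\<^sup>2"
      by (simp add: a_def c_def)
  qed
qed

theorem lemma2:
  fixes B :: real
  assumes "B > 0"
  shows "(\<forall>t>0. filterlim (\<lambda>x. y3 B t x) at_top at_top)
       \<and> (\<forall>t>0. filterlim (\<lambda>x. y4 B t x) at_bot at_top)
       \<and> (\<forall>x>0. filterlim (\<lambda>t. y3 B t x) at_top (at_right 0))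
       \<and> (\<forall>x>0. filterlim (\<lambda>t. y4 B t x) at_bot (at_right 0))
       \<and> (\<forall>t>0. filterlim (\<lambda>x. y1 B t x) at_bot at_bot)
       \<and> (\<forall>t>0. filterlim (\<lambda>x. y2 B t x) at_bot at_bot)
       \<and> (\<forall>x>0. filterlim (\<lambda>t. y1 B t (-x)) at_bot (at_right 0))
       \<and> (\<forall>x>0. filterlim (\<lambda>t. y2 B t (-x)) at_bot (at_right 0))"
proof -
  have Bt: "0 < B * t" if "0 < t" for t
    using assms that by simp
  have y1_at_bot_in_x: "filterlim (\<lambda>x. y1 B t x) at_bot at_bot" if "0 < t" for t
    using y3_filterlim_at_top_in_x[OF Bt[OF that]]
    by (simp add: y1_eq_minus_y3_reflected filterlim_at_bot_mirror flip: filterlim_uminus_at_top)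
  have y2_at_bot_in_x: "filterlim (\<lambda>x. y2 B t x) at_bot at_bot" if "0 < t" for t
    using y4_filterlim_at_bot_in_x[OF Bt[OF that]]
    by (simp add: y2_eq_y4_reflected filterlim_at_bot_mirror)
  have y1_at_bot_in_t: "filterlim (\<lambda>t. y1 B t (- x)) at_bot (at_right 0)" if "0 < x" for x
    using y3_filterlim_at_top_in_t[OF assms that]
    by (simp add: y1_eq_minus_y3_reflected flip: filterlim_uminus_at_top)
  have y2_at_bot_in_t: "filterlim (\<lambda>t. y2 B t (- x)) at_bot (at_right 0)" if "0 < x" for x
    using y4_filterlim_at_bot_in_t[OF assms that] by (simp add: y2_eq_y4_reflected)
  show ?thesis
    using y3_filterlim_at_top_in_x y4_filterlim_at_bot_in_x Bt
      y3_filterlim_at_top_in_t[OF assms] y4_filterlim_at_bot_in_t[OF assms]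
      y1_at_bot_in_x y2_at_bot_in_x y1_at_bot_in_t y2_at_bot_in_t
    by blast
qed

end
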